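(* Let $U=\{\xi_1,\dots,\xi_p\}\subset\mathbb{R}^k$ be finite, for $j\in\Lambda=\{1,\dots,m\}$ let $f_j:\mathbb{R}^n\times U\to\mathbb{R}$ with $x\mapsto f_j(x,\xi_i)$ continuously differentiable for each $i\in\bar\Lambda=\{1,\dots,p\}$, and let $\Phi=(\Phi_1,\dots,\Phi_m)$ with $\Phi_j(x)=\max_{i\in\bar\Lambda}f_j(x,\xi_i)$. (i) Let $\{x^k\}$ be any infinite sequence of non-critical points in $\mathbb{R}^n$ such that $\Phi(x^{k+1})\le\Phi(x^k)$ (componentwise) for all $k$. If $x^*$ is any accumulation point of $\{x^k\}$, then $\Phi(x^* )\le\Phi(x^k)$ for all $k$ and $\lim_{k\to\infty}\Phi(x^k)=\Phi(x^* )$. Moreover, $\Phi$ is constant on the set of accumulation points of $\{x^k\}$. (ii) If $\{x^k\}$ is generated by Algorithm 1 (described in the context) and has an accumulation point, then all conclusions of (i) hold for this sequence.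
   Context: For vectors, $u\le v$ means componentwise. For $x\in\mathbb{R}^n$, $I_j(x)=\{i\in\bar\Lambda:f_j(x,\xi_i)=\Phi_j(x)\}$; $x^*$ is a critical point for $\Phi$ if there is no $v\in\mathbb{R}^n$ with $\nabla f_j(x^*,\xi_i)^Tv<0$ for all $j\in\Lambda$, $i\in I_j(x^* )$; otherwise it is non-critical. For $x\in\mathbb{R}^n$, let $\vartheta_x(t)=\max_{j\in\Lambda}\max_{i\in\bar\Lambda}\{f_j(x,\xi_i)+\nabla f_j(x,\xi_i)^Tt-\Phi_j(x)\}$, let $t(x)$ be the unique minimizer over $t$ of $\vartheta_x(t)+\frac12\|t\|^2$, and $\Theta(x)$ its optimal value. Algorithm 1: choose $\epsilon>0$, $\beta\in(0,1)$, $x^0\in\mathbb{R}^n$, set $k=0$. Step 2: compute $t^k=t(x^k)$ and $\Theta(x^k)$. Step 3: if $|\Theta(x^k)|<\epsilon$, stop. Step 4: let $\alpha_k$ be the largest $\alpha\in\{1/2^r:r=1,2,\dots\}$ such that for all $j$, $\Phi_j(x^k+\alpha t^k)\le\Phi_j(x^k)+\alpha\beta\big(\max_{i\in\bar\Lambda}\{f_j(x^k,\xi_i)+\nabla f_j(x^k,\xi_i)^Tt^k\}-\Phi_j(x^k)\big)$. Step 5: set $x^{k+1}=x^k+\alpha_kt^k$, $k:=k+1$, go to Step 2. *)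

theory Defs
  imports "HOL-Analysis.Analysis"
begin

text \<open>Objective index set Lambda = {1..m}, scenario index set Lambda-bar = {1..p}.
  f j x u stands for f_j(x,u); xi i is the i-th scenario; g j i x is the gradient
  of x |-> f_j(x, xi_i) at x.\<close>

definition Phi :: "(nat \<Rightarrow> 'x \<Rightarrow> 'u \<Rightarrow> real) \<Rightarrow> (nat \<Rightarrow> 'u) \<Rightarrow> nat \<Rightarrow> nat \<Rightarrow> 'x \<Rightarrow> real" where
  "Phi f xi p j x = (MAX i\<in>{1..p}. f j x (xi i))"

definition active_set :: "(nat \<Rightarrow> 'x \<Rightarrow> 'u \<Rightarrow> real) \<Rightarrow> (nat \<Rightarrow> 'u) \<Rightarrow> nat \<Rightarrow> nat \<Rightarrow> 'x \<Rightarrow> nat set" where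
  "active_set f xi p j x = {i \<in> {1..p}. f j x (xi i) = Phi f xi p j x}"

definition critical :: "(nat \<Rightarrow> 'x \<Rightarrow> 'u \<Rightarrow> real) \<Rightarrow> (nat \<Rightarrow> nat \<Rightarrow> 'x \<Rightarrow> 'x::real_inner)
    \<Rightarrow> (nat \<Rightarrow> 'u) \<Rightarrow> nat \<Rightarrow> nat \<Rightarrow> 'x \<Rightarrow> bool" where
  "critical f g xi m p x \<longleftrightarrow>
     \<not> (\<exists>v. \<forall>j\<in>{1..m}. \<forall>i\<in>active_set f xi p j x. g j i x \<bullet> v < 0)"

definition theta_fun :: "(nat \<Rightarrow> 'x \<Rightarrow> 'u \<Rightarrow> real) \<Rightarrow> (nat \<Rightarrow> nat \<Rightarrow> 'x \<Rightarrow> 'x::real_inner)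
    \<Rightarrow> (nat \<Rightarrow> 'u) \<Rightarrow> nat \<Rightarrow> nat \<Rightarrow> 'x \<Rightarrow> 'x \<Rightarrow> real" where
  "theta_fun f g xi m p x t =
     (MAX j\<in>{1..m}. MAX i\<in>{1..p}. f j x (xi i) + g j i x \<bullet> t - Phi f xi p j x)"

definition tdir :: "(nat \<Rightarrow> 'x \<Rightarrow> 'u \<Rightarrow> real) \<Rightarrow> (nat \<Rightarrow> nat \<Rightarrow> 'x \<Rightarrow> 'x::real_inner)
    \<Rightarrow> (nat \<Rightarrow> 'u) \<Rightarrow> nat \<Rightarrow> nat \<Rightarrow> 'x \<Rightarrow> 'x" where
  "tdir f g xi m p x = (THE t. \<forall>s.
      theta_fun f g xi m p x t + (norm t)\<^sup>2 / 2 \<le> theta_fun f g xi m p x s + (norm s)\<^sup>2 / 2)"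

definition Theta :: "(nat \<Rightarrow> 'x \<Rightarrow> 'u \<Rightarrow> real) \<Rightarrow> (nat \<Rightarrow> nat \<Rightarrow> 'x \<Rightarrow> 'x::real_inner)
    \<Rightarrow> (nat \<Rightarrow> 'u) \<Rightarrow> nat \<Rightarrow> nat \<Rightarrow> 'x \<Rightarrow> real" where
  "Theta f g xi m p x =
     theta_fun f g xi m p x (tdir f g xi m p x) + (norm (tdir f g xi m p x))\<^sup>2 / 2"

definition armijo :: "(nat \<Rightarrow> 'x \<Rightarrow> 'u \<Rightarrow> real) \<Rightarrow> (nat \<Rightarrow> nat \<Rightarrow> 'x \<Rightarrow> 'x::real_inner)
    \<Rightarrow> (nat \<Rightarrow> 'u) \<Rightarrow> nat \<Rightarrow> nat \<Rightarrow> real \<Rightarrow> 'x \<Rightarrow> 'x \<Rightarrow> real \<Rightarrow> bool" where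
  "armijo f g xi m p \<beta> x t a \<longleftrightarrow>
     (\<forall>j\<in>{1..m}. Phi f xi p j (x + a *\<^sub>R t) \<le>
        Phi f xi p j x + a * \<beta> * ((MAX i\<in>{1..p}. f j x (xi i) + g j i x \<bullet> t) - Phi f xi p j x))"

text \<open>A sequence generated by Algorithm 1 that never stops (infinite sequence).\<close>
definition alg1_seq :: "(nat \<Rightarrow> 'x \<Rightarrow> 'u \<Rightarrow> real) \<Rightarrow> (nat \<Rightarrow> nat \<Rightarrow> 'x \<Rightarrow> 'x::real_inner)
    \<Rightarrow> (nat \<Rightarrow> 'u) \<Rightarrow> nat \<Rightarrow> nat \<Rightarrow> real \<Rightarrow> real \<Rightarrow> (nat \<Rightarrow> 'x) \<Rightarrow> bool" where
  "alg1_seq f g xi m p \<epsilon> \<beta> X \<longleftrightarrow>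
     (\<forall>k. \<not> (\<bar>Theta f g xi m p (X k)\<bar> < \<epsilon>) \<and>
        (\<exists>a. (\<exists>r::nat. r \<ge> 1 \<and> a = 1 / 2 ^ r) \<and>
             armijo f g xi m p \<beta> (X k) (tdir f g xi m p (X k)) a \<and>
             (\<forall>r::nat. r \<ge> 1 \<longrightarrow> armijo f g xi m p \<beta> (X k) (tdir f g xi m p (X k)) (1 / 2 ^ r)
                 \<longrightarrow> 1 / 2 ^ r \<le> a) \<and>
             X (Suc k) = X k + a *\<^sub>R tdir f g xi m p (X k)))"

definition acc_point :: "(nat \<Rightarrow> 'x::topological_space) \<Rightarrow> 'x \<Rightarrow> bool" where
  "acc_point X a \<longleftrightarrow> (\<exists>r. strict_mono r \<and> (X \<circ> r) \<longlonglongrightarrow> a)"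

end

theory Submission
  imports Defs
begin

text \<open>Each \<open>\<Phi>\<^sub>j\<close> is continuous, being a finite maximum of continuous functions. Along a
  subsequence converging to an accumulation point \<open>x\<^sup>*\<close> the decreasing values \<open>\<Phi>\<^sub>j(x\<^sup>k)\<close>
  therefore tend to \<open>\<Phi>\<^sub>j(x\<^sup>*)\<close>, and a monotone sequence with a convergent subsequence converges
  to the same limit, which is also its infimum. So \<open>\<Phi>(x\<^sup>*) = lim \<Phi>(x\<^sup>k)\<close> for every accumulation
  point.

  For Algorithm 1 it remains to see that \<open>\<Phi>\<close> decreases along the iterates. The function
  \<open>\<theta>\<^sub>x\<close> is a maximum of affine functions, hence convex, so \<open>\<theta>\<^sub>x(t) + \<parallel>t\<parallel>\<^sup>2/2\<close> is strongly
  convex and coercive and has a unique minimiser \<open>t(x)\<close>. Since \<open>\<theta>\<^sub>x(0) \<le> 0\<close>, minimality gives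
  \<open>\<theta>\<^sub>x(t(x)) \<le> 0\<close>, so the right-hand side of the Armijo condition is at most \<open>\<Phi>\<^sub>j(x)\<close>.\<close>

lemma continuous_Max:
  fixes h :: "'i \<Rightarrow> 'a::t2_space \<Rightarrow> 'b::linorder_topology"
  assumes "finite I" "I \<noteq> {}" "\<And>i. i \<in> I \<Longrightarrow> continuous F (h i)"
  shows "continuous F (\<lambda>x. MAX i\<in>I. h i x)"
  using assms
proof (induction I rule: finite_ne_induct)
  case (insert a A)
  have "(\<lambda>x. MAX i\<in>insert a A. h i x) = (\<lambda>x. max (h a x) (MAX i\<in>A. h i x))"
    using insert.hyps by simp
  then show ?case
    using insert.IH insert.prems by (simp add: continuous_max)
qed simp

lemma convex_on_Max:
  fixes h :: "'i \<Rightarrow> 'a::real_vector \<Rightarrow> real"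
  assumes "finite I" "I \<noteq> {}" "\<And>i. i \<in> I \<Longrightarrow> convex_on S (h i)"
  shows "convex_on S (\<lambda>x. MAX i\<in>I. h i x)"
proof (rule convex_onI)
  fix t :: real and x y assume t: "0 < t" "t < 1" and xy: "x \<in> S" "y \<in> S"
  show "(MAX i\<in>I. h i ((1 - t) *\<^sub>R x + t *\<^sub>R y)) \<le> (1 - t) * (MAX i\<in>I. h i x) + t * (MAX i\<in>I. h i y)"
  proof (rule Max.boundedI)
    fix z assume "z \<in> (\<lambda>i. h i ((1 - t) *\<^sub>R x + t *\<^sub>R y)) ` I"
    then obtain i where i: "i \<in> I" and z: "z = h i ((1 - t) *\<^sub>R x + t *\<^sub>R y)" by blast
    have "z \<le> (1 - t) * h i x + t * h i y"
      unfolding z using convex_onD[OF assms(3)[OF i]] t xy by simp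
    also have "\<dots> \<le> (1 - t) * (MAX i\<in>I. h i x) + t * (MAX i\<in>I. h i y)"
      using t i assms(1) by (intro add_mono mult_left_mono) auto
    finally show "z \<le> \<dots>" .
  qed (use assms in auto)
next
  show "convex S"
    using assms(2,3) convex_on_def by blast
qed

lemma decseq_tendsto_of_subseq:
  fixes s :: "nat \<Rightarrow> real"
  assumes dec: "decseq s" and r: "strict_mono r" and lim: "(s \<circ> r) \<longlonglongrightarrow> L"
  shows "s \<longlonglongrightarrow> L"
proof -
  have "L \<le> s k" for k
  proof (rule LIMSEQ_le_const2[OF lim])
    show "\<exists>N. \<forall>n\<ge>N. (s \<circ> r) n \<le> s k"
      using dec r by (metis comp_apply decseqD le_trans seq_suble)
  qed
  then obtain L' where L': "s \<longlonglongrightarrow> L'"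
    using decseq_convergent[OF dec] by blast
  moreover have "L' = L"
    using LIMSEQ_subseq_LIMSEQ[OF L' r] lim LIMSEQ_unique by blast
  ultimately show ?thesis by simp
qed

lemma tendsto_value_at_acc_point:
  fixes \<phi> :: "'a::t2_space \<Rightarrow> real"
  assumes "isCont \<phi> a" "acc_point X a" "decseq (\<lambda>k. \<phi> (X k))"
  shows "(\<lambda>k. \<phi> (X k)) \<longlonglongrightarrow> \<phi> a"
proof -
  obtain r where r: "strict_mono r" "(X \<circ> r) \<longlonglongrightarrow> a"
    using assms(2) unfolding acc_point_def by blast
  have "((\<lambda>k. \<phi> (X k)) \<circ> r) \<longlonglongrightarrow> \<phi> a"
    using isCont_tendsto_compose[OF assms(1) r(2)] by (simp add: comp_def)
  then show ?thesis
    using decseq_tendsto_of_subseq[OF assms(3) r(1)] by blast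
qed

lemma decreasing_values_at_acc_points:
  fixes \<phi> :: "'j \<Rightarrow> 'a::t2_space \<Rightarrow> real"
  assumes cont: "\<And>j x. j \<in> J \<Longrightarrow> isCont (\<phi> j) x"
    and dec: "\<forall>k. \<forall>j\<in>J. \<phi> j (X (Suc k)) \<le> \<phi> j (X k)"
  shows "(\<forall>xs. acc_point X xs \<longrightarrow>
            (\<forall>k. \<forall>j\<in>J. \<phi> j xs \<le> \<phi> j (X k)) \<and> (\<forall>j\<in>J. (\<lambda>k. \<phi> j (X k)) \<longlonglongrightarrow> \<phi> j xs)) \<and>
         (\<forall>a b. acc_point X a \<and> acc_point X b \<longrightarrow> (\<forall>j\<in>J. \<phi> j a = \<phi> j b))"
proof -
  have decseq: "decseq (\<lambda>k. \<phi> j (X k))" if "j \<in> J" for j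
    using dec that by (simp add: decseq_SucI)
  have lim: "(\<lambda>k. \<phi> j (X k)) \<longlonglongrightarrow> \<phi> j a" if "acc_point X a" "j \<in> J" for a j
    using tendsto_value_at_acc_point[OF cont that(1) decseq] that(2) by blast
  show ?thesis
    using lim decseq_ge[OF decseq lim] LIMSEQ_unique by meson
qed

lemma coercive_continuous_attains_inf:
  fixes h :: "'a::{real_normed_vector,heine_borel} \<Rightarrow> real"
  assumes cont: "continuous_on UNIV h" and far: "\<And>t. R < norm t \<Longrightarrow> h 0 \<le> h t"
  shows "\<exists>t. \<forall>s. h t \<le> h s"
proof -
  have "cball 0 \<bar>R\<bar> \<noteq> {}"
    by simp
  then obtain t where t: "\<forall>s\<in>cball 0 \<bar>R\<bar>. h t \<le> h s"
    using continuous_attains_inf[OF compact_cball _ continuous_on_subset[OF cont subset_UNIV]]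
    by blast
  have "h t \<le> h s" for s
  proof (cases "norm s \<le> \<bar>R\<bar>")
    case False
    then have "h 0 \<le> h s" using far by simp
    moreover have "h t \<le> h 0" using t by simp
    ultimately show ?thesis by simp
  qed (use t in simp)
  then show ?thesis by blast
qed

lemma convex_plus_half_norm_sq_midpoint:
  fixes \<phi> :: "'a::real_inner \<Rightarrow> real"
  assumes "convex_on UNIV \<phi>"
  shows "\<phi> ((1/2) *\<^sub>R (x + y)) + (norm ((1/2) *\<^sub>R (x + y)))\<^sup>2 / 2
           \<le> ((\<phi> x + (norm x)\<^sup>2 / 2) + (\<phi> y + (norm y)\<^sup>2 / 2)) / 2 - (norm (x - y))\<^sup>2 / 8"
proof -
  have "\<phi> ((1/2) *\<^sub>R (x + y)) \<le> (\<phi> x + \<phi> y) / 2"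
    using convex_onD[OF assms, of "1/2" x y] by (simp add: scaleR_add_right)
  moreover have "(norm ((1/2) *\<^sub>R (x + y)))\<^sup>2 = ((norm x)\<^sup>2 + (norm y)\<^sup>2) / 2 - (norm (x - y))\<^sup>2 / 4"
    unfolding power2_norm_eq_inner
    by (simp add: inner_add_left inner_add_right inner_diff_left inner_diff_right
        inner_commute[of y x] field_simps)
  ultimately show ?thesis by argo
qed

lemma ex1_minimizer_convex_plus_half_norm_sq:
  fixes \<phi> :: "'a::euclidean_space \<Rightarrow> real"
  assumes convex: "convex_on UNIV \<phi>" and minorant: "\<And>t. a - b * norm t \<le> \<phi> t"
  shows "\<exists>!t. \<forall>s. \<phi> t + (norm t)\<^sup>2 / 2 \<le> \<phi> s + (norm s)\<^sup>2 / 2"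
proof (rule ex_ex1I)
  define h where "h t = \<phi> t + (norm t)\<^sup>2 / 2" for t
  define c where "c = \<bar>h 0 - a\<bar> + 1"
  show "\<exists>t. \<forall>s. h t \<le> h s"
  proof (rule coercive_continuous_attains_inf)
    show "continuous_on UNIV h"
      unfolding h_def using convex_on_continuous[OF open_UNIV convex] by (intro continuous_intros) auto
  next
    fix t :: 'a
    assume "2 * \<bar>b\<bar> + 2 * c < norm t"
    moreover have "1 \<le> c"
      unfolding c_def by simp
    ultimately have "1 * c \<le> norm t * (norm t / 2 - \<bar>b\<bar>)"
      by (intro mult_mono) simp_all
    moreover have "h 0 - a < c"
      unfolding c_def by linarith
    moreover have "b * norm t \<le> \<bar>b\<bar> * norm t"
      by (simp add: mult_right_mono)
    moreover have "a - b * norm t + (norm t)\<^sup>2 / 2 \<le> h t"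
      unfolding h_def using minorant[of t] by simp
    ultimately show "h 0 \<le> h t"
      by (simp add: power2_eq_square algebra_simps)
  qed
next
  fix t1 t2
  assume min1: "\<forall>s. \<phi> t1 + (norm t1)\<^sup>2 / 2 \<le> \<phi> s + (norm s)\<^sup>2 / 2"
    and min2: "\<forall>s. \<phi> t2 + (norm t2)\<^sup>2 / 2 \<le> \<phi> s + (norm s)\<^sup>2 / 2"
  have "(norm (t1 - t2))\<^sup>2 \<le> 0"
    using convex_plus_half_norm_sq_midpoint[OF convex, of t1 t2]
      min1[rule_format, of "(1/2) *\<^sub>R (t1 + t2)"] min2[rule_format, of t1] by argo
  then show "t1 = t2" by simp
qed

lemma isCont_Phi:
  assumes "p \<ge> 1" and "\<And>i. i \<in> {1..p} \<Longrightarrow> isCont (\<lambda>y. f j y (xi i)) x"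
  shows "isCont (Phi f xi p j) x"
proof -
  have "Phi f xi p j = (\<lambda>y. MAX i\<in>{1..p}. f j y (xi i))"
    by (rule ext) (simp add: Phi_def)
  then show ?thesis
    using assms by (auto intro: continuous_Max)
qed

lemma linearization_le_theta_fun:
  assumes "j \<in> {1..m}" "i \<in> {1..p}"
  shows "f j x (xi i) + g j i x \<bullet> t - Phi f xi p j x \<le> theta_fun f g xi m p x t"
proof -
  have "f j x (xi i) + g j i x \<bullet> t - Phi f xi p j x
          \<le> (MAX i\<in>{1..p}. f j x (xi i) + g j i x \<bullet> t - Phi f xi p j x)"
    using assms(2) by (intro Max_ge) auto
  also have "\<dots> \<le> theta_fun f g xi m p x t"
    unfolding theta_fun_def using assms(1) by (intro Max_ge) auto
  finally show ?thesis .
qed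

lemma convex_on_theta_fun:
  assumes "m \<ge> 1" "p \<ge> 1"
  shows "convex_on UNIV (theta_fun f g xi m p x)"
proof -
  have affine: "convex_on UNIV (\<lambda>t. f j x (xi i) + g j i x \<bullet> t - Phi f xi p j x)" for j i
    by (rule convex_onI) (simp_all add: inner_add_right algebra_simps)
  have "theta_fun f g xi m p x =
          (\<lambda>t. MAX j\<in>{1..m}. MAX i\<in>{1..p}. f j x (xi i) + g j i x \<bullet> t - Phi f xi p j x)"
    by (rule ext) (simp add: theta_fun_def)
  then show ?thesis
    using assms affine by (simp add: convex_on_Max)
qed

lemma theta_fun_zero_nonpos:
  assumes "m \<ge> 1" "p \<ge> 1"
  shows "theta_fun f g xi m p x 0 \<le> 0"
  unfolding theta_fun_def using assms
  by (intro Max.boundedI) (auto simp: Phi_def)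

lemma tdir_minimizes:
  fixes g :: "nat \<Rightarrow> nat \<Rightarrow> 'x \<Rightarrow> 'x::euclidean_space"
  assumes m: "m \<ge> 1" and p: "p \<ge> 1"
  shows "theta_fun f g xi m p x (tdir f g xi m p x) + (norm (tdir f g xi m p x))\<^sup>2 / 2
           \<le> theta_fun f g xi m p x s + (norm s)\<^sup>2 / 2"
proof -
  have "f 1 x (xi 1) - Phi f xi p 1 x - norm (g 1 1 x) * norm t \<le> theta_fun f g xi m p x t" for t
  proof -
    have "- (norm (g 1 1 x) * norm t) \<le> g 1 1 x \<bullet> t"
      using Cauchy_Schwarz_ineq2[of "g 1 1 x" t] by linarith
    then show ?thesis
      using linearization_le_theta_fun[of 1 m 1 p f x xi g t] m p by simp
  qed
  \<comment> \<open>\<open>tdir\<close> is a definite description, so uniqueness of the minimiser is needed too.\<close>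
  then have "\<exists>!t. \<forall>s. theta_fun f g xi m p x t + (norm t)\<^sup>2 / 2 \<le> theta_fun f g xi m p x s + (norm s)\<^sup>2 / 2"
    by (intro ex1_minimizer_convex_plus_half_norm_sq convex_on_theta_fun m p)
  then show ?thesis
    unfolding tdir_def by (rule theI'[THEN spec])
qed

lemma theta_fun_tdir_nonpos:
  fixes g :: "nat \<Rightarrow> nat \<Rightarrow> 'x \<Rightarrow> 'x::euclidean_space"
  assumes "m \<ge> 1" "p \<ge> 1"
  shows "theta_fun f g xi m p x (tdir f g xi m p x) \<le> 0"
proof -
  have "theta_fun f g xi m p x (tdir f g xi m p x) + (norm (tdir f g xi m p x))\<^sup>2 / 2
          \<le> theta_fun f g xi m p x 0"
    using tdir_minimizes[OF assms, of f g xi x 0] by simp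
  then show ?thesis
    using theta_fun_zero_nonpos[OF assms, of f g xi x] zero_le_power2[of "norm (tdir f g xi m p x)"]
    by argo
qed

lemma armijo_Phi_le:
  assumes armijo: "armijo f g xi m p \<beta> x t a" and "0 \<le> a" "0 \<le> \<beta>"
    and descent: "theta_fun f g xi m p x t \<le> 0" and j: "j \<in> {1..m}" and p: "p \<ge> 1"
  shows "Phi f xi p j (x + a *\<^sub>R t) \<le> Phi f xi p j x"
proof -
  have "f j x (xi i) + g j i x \<bullet> t \<le> Phi f xi p j x" if "i \<in> {1..p}" for i
    using linearization_le_theta_fun[OF j that, of f x xi g t] descent by linarith
  then have "(MAX i\<in>{1..p}. f j x (xi i) + g j i x \<bullet> t) \<le> Phi f xi p j x"
    using p by (intro Max.boundedI) auto
  then have "a * \<beta> * ((MAX i\<in>{1..p}. f j x (xi i) + g j i x \<bullet> t) - Phi f xi p j x) \<le> 0"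
    using assms(2,3) by (intro mult_nonneg_nonpos) auto
  moreover have "Phi f xi p j (x + a *\<^sub>R t) \<le>
      Phi f xi p j x + a * \<beta> * ((MAX i\<in>{1..p}. f j x (xi i) + g j i x \<bullet> t) - Phi f xi p j x)"
    using armijo j unfolding armijo_def by blast
  ultimately show ?thesis
    by linarith
qed

lemma alg1_seq_Phi_decreasing:
  fixes g :: "nat \<Rightarrow> nat \<Rightarrow> 'x \<Rightarrow> 'x::euclidean_space"
  assumes m: "m \<ge> 1" and p: "p \<ge> 1" and "0 \<le> \<beta>" and "alg1_seq f g xi m p \<epsilon> \<beta> X"
    and j: "j \<in> {1..m}"
  shows "Phi f xi p j (X (Suc k)) \<le> Phi f xi p j (X k)"
proof -
  obtain a r where a: "a = 1 / 2 ^ r"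
    and armijo: "armijo f g xi m p \<beta> (X k) (tdir f g xi m p (X k)) a"
    and step: "X (Suc k) = X k + a *\<^sub>R tdir f g xi m p (X k)"
    using assms(4) unfolding alg1_seq_def by blast
  have "0 \<le> a"
    using a by simp
  then show ?thesis
    unfolding step by (rule armijo_Phi_le[OF armijo _ assms(3) theta_fun_tdir_nonpos[OF m p] j p])
qed

theorem lemma4p4:
  fixes f :: "nat \<Rightarrow> real^'n \<Rightarrow> real^'k \<Rightarrow> real"
    and g :: "nat \<Rightarrow> nat \<Rightarrow> real^'n \<Rightarrow> real^'n"
    and xi :: "nat \<Rightarrow> real^'k"
    and m p :: nat
  assumes m: "m \<ge> 1" and p: "p \<ge> 1"
    and xi_inj: "inj_on xi {1..p}"
    and grad: "\<And>j i x. j \<in> {1..m} \<Longrightarrow> i \<in> {1..p} \<Longrightarrow>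
                 ((\<lambda>y. f j y (xi i)) has_derivative (\<lambda>v. g j i x \<bullet> v)) (at x)"
    and grad_cont: "\<And>j i. j \<in> {1..m} \<Longrightarrow> i \<in> {1..p} \<Longrightarrow> continuous_on UNIV (g j i)"
  shows
   "(\<forall>X :: nat \<Rightarrow> real^'n.
       (\<forall>k. \<not> critical f g xi m p (X k)) \<and>
       (\<forall>k. \<forall>j\<in>{1..m}. Phi f xi p j (X (Suc k)) \<le> Phi f xi p j (X k)) \<longrightarrow>
       (\<forall>xs. acc_point X xs \<longrightarrow>
          (\<forall>k. \<forall>j\<in>{1..m}. Phi f xi p j xs \<le> Phi f xi p j (X k)) \<and>
          (\<forall>j\<in>{1..m}. (\<lambda>k. Phi f xi p j (X k)) \<longlonglongrightarrow> Phi f xi p j xs)) \<and>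
       (\<forall>a b. acc_point X a \<and> acc_point X b \<longrightarrow> (\<forall>j\<in>{1..m}. Phi f xi p j a = Phi f xi p j b)))
    \<and>
    (\<forall>(\<epsilon>::real) (\<beta>::real) (X :: nat \<Rightarrow> real^'n).
       \<epsilon> > 0 \<and> 0 < \<beta> \<and> \<beta> < 1 \<and> alg1_seq f g xi m p \<epsilon> \<beta> X \<and> (\<exists>a. acc_point X a) \<longrightarrow>
       (\<forall>xs. acc_point X xs \<longrightarrow>
          (\<forall>k. \<forall>j\<in>{1..m}. Phi f xi p j xs \<le> Phi f xi p j (X k)) \<and>
          (\<forall>j\<in>{1..m}. (\<lambda>k. Phi f xi p j (X k)) \<longlonglongrightarrow> Phi f xi p j xs)) \<and>
       (\<forall>a b. acc_point X a \<and> acc_point X b \<longrightarrow> (\<forall>j\<in>{1..m}. Phi f xi p j a = Phi f xi p j b)))"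
proof -
  have cont: "isCont (Phi f xi p j) x" if "j \<in> {1..m}" for j x
    using p grad[OF that] by (intro isCont_Phi) (auto intro: has_derivative_continuous)
  note acc_points = decreasing_values_at_acc_points[of "{1..m}" "Phi f xi p", OF cont]
  have alg1_decreasing: "\<forall>k. \<forall>j\<in>{1..m}. Phi f xi p j (X (Suc k)) \<le> Phi f xi p j (X k)"
    if "0 < \<beta>" "alg1_seq f g xi m p \<epsilon> \<beta> X" for \<epsilon> \<beta> and X :: "nat \<Rightarrow> real^'n"
    using alg1_seq_Phi_decreasing[OF m p less_imp_le] that by blast
  show ?thesis
    using acc_points alg1_decreasing by blast
qed

end
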